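(* Let $\tilde q=q^2$. For all integers $v\geq 1$ and $L\geq 0$, \[ \sum_{n_1,\ldots,n_v\geq 0} \frac{\tilde q^{\sum_{i=1}^v N_i^2}}{(\tilde q)_{n_1}\cdots(\tilde q)_{n_{v-1}}(\tilde q)_{2n_v}}\cdot\frac{(q^3;q^6)_{n_v}}{(q;q^2)_{n_v}}\cdot\frac{(\tilde q)_{2L}}{(\tilde q)_{L-N_1}} =\sum_{j=-\infty}^{\infty} (-1)^j \left(\frac{j+1}{3}\right) q^{(2v+1)j^2}{2L \brack L+j}_{\tilde q}, \] where $N_i=n_i+n_{i+1}+\cdots+n_v$ for $i=1,\ldots,v$ (for $v=1$ the product $(\tilde q)_{n_1}\cdots(\tilde q)_{n_{v-1}}$ is empty).
   Context: For a variable $a$ and integer $n\ge 0$, $(a;q)_n=(1-a)(1-aq)\cdots(1-aq^{n-1})$, and $(\tilde q)_n=(\tilde q;\tilde q)_n$; by convention $1/(\tilde q)_n=0$ for negative integers $n$. The $q$-binomial coefficient in base $\tilde q$ is ${A \brack B}_{\tilde q}=\frac{(\tilde q;\tilde q)_A}{(\tilde q;\tilde q)_B(\tilde q;\tilde q)_{A-B}}$ if $0\le B\le A$ are integers, and $0$ otherwise. $\left(\frac{j}{3}\right)$ is the Legendre symbol modulo 3: it equals $1$ if $j\equiv 1 \pmod 3$, $-1$ if $j\equiv -1\pmod 3$, and $0$ if $3\mid j$. *)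

theory Defs
  imports "HOL-Analysis.Analysis" "HOL-Number_Theory.Number_Theory"
begin

definition qpoch :: "complex \<Rightarrow> complex \<Rightarrow> nat \<Rightarrow> complex" where
  "qpoch a q n = (\<Prod>k<n. 1 - a * q ^ k)"

definition qinvfac :: "complex \<Rightarrow> int \<Rightarrow> complex" where
  "qinvfac x m = (if m < 0 then 0 else 1 / qpoch x x (nat m))"

definition qbinom :: "complex \<Rightarrow> int \<Rightarrow> int \<Rightarrow> complex" where
  "qbinom x A B = (if 0 \<le> B \<and> B \<le> A
     then qpoch x x (nat A) / (qpoch x x (nat B) * qpoch x x (nat (A - B))) else 0)"

end

theory Submission
  imports Defs
begin

(*
  Write x = q^2. Peeling n_1 off the multisum (so that N_1 = n_1 + N_2) is one step
  beta'_L = sum_m x^(m^2) beta_m / (x;x)_(L-m) of a Bailey chain, so the left side is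
  (x;x)_(2L) times the v-fold chain started at
    alpha_j = (-1)^j (j+1 | 3) q^(j^2),   beta_L = (q^3;q^6)_L / ((q;q^2)_L (x;x)_(2L)).
  By Bailey's lemma, which here reduces to a q-Chu-Vandermonde sum, every step multiplies
  alpha_j by x^(j^2), and (x;x)_(2L) / ((x;x)_(L-j) (x;x)_(L+j)) is the q-binomial on the right.

  That (alpha, beta) is a Bailey pair amounts to
    sum_j (-1)^j (j+1 | 3) q^(j^2) [2L, L+j]_x = prod_(i<L) (1 + q^(2i+1) + q^(4i+2)).
  Since (m | 3) (omega - omega^2) = omega^m - omega^(2m) for a primitive cube root of unity
  omega, the left side is a difference of two values of the finite Jacobi triple product
    sum_k (-1)^k q^((k-L)^2) w^k [2L, k]_x = prod_(i<L) (1 - w q^(2i+1)) (q^(2i+1) - w),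
  a consequence of Rothe's q-binomial theorem, at w = omega and w = omega^2.
*)

section \<open>q-Pochhammer symbols and Gaussian binomial coefficients\<close>

lemma qpoch_0 [simp]: "qpoch a q 0 = 1"
  by (simp add: qpoch_def)

lemma qpoch_Suc: "qpoch a q (Suc n) = qpoch a q n * (1 - a * q ^ n)"
  by (simp add: qpoch_def)

lemma qpoch_add: "qpoch a q (m + n) = qpoch a q m * qpoch (a * q ^ m) q n"
  by (induction n) (simp_all add: qpoch_Suc power_add mult_ac)

lemma qpoch_Suc_left: "qpoch a q (Suc n) = (1 - a) * qpoch (a * q) q n"
  unfolding qpoch_def prod.lessThan_Suc_shift by (simp add: mult_ac)

lemma qpoch_nonzero:
  assumes "norm a < 1" "norm q \<le> 1"
  shows "qpoch a q n \<noteq> 0"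
proof -
  have "a * q ^ k \<noteq> 1" for k
  proof -
    have "norm (a * q ^ k) \<le> norm a"
      using assms by (simp add: norm_mult norm_power mult_left_le power_le_one)
    then show ?thesis using assms(1) by auto
  qed
  then show ?thesis by (simp add: qpoch_def)
qed

lemma qinvfac_of_nat [simp]: "qinvfac x (int n) = inverse (qpoch x x n)"
  by (simp add: qinvfac_def divide_inverse)

lemma qinvfac_neg: "m < 0 \<Longrightarrow> qinvfac x m = 0"
  by (simp add: qinvfac_def)

fun gauss_binom :: "'a::comm_ring_1 \<Rightarrow> nat \<Rightarrow> nat \<Rightarrow> 'a" where
  "gauss_binom x 0 k = (if k = 0 then 1 else 0)"
| "gauss_binom x (Suc n) k =
     (if k = 0 then 1 else gauss_binom x n (k - 1) + x ^ k * gauss_binom x n k)"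

lemma gauss_binom_eq_0: "n < k \<Longrightarrow> gauss_binom x n k = 0"
  by (induction n arbitrary: k) auto

lemma gauss_binom_0_right [simp]: "gauss_binom x n 0 = 1"
  by (cases n) auto

lemma sum_gauss_binom_Suc:
  "(\<Sum>k\<le>Suc n. gauss_binom x (Suc n) k * c k)
     = (\<Sum>k\<le>n. gauss_binom x n k * (c (Suc k) + x ^ k * c k))"
proof -
  have shifted: "(\<Sum>k\<le>n. x ^ k * gauss_binom x n k * c k)
      = c 0 + (\<Sum>k\<le>n. x ^ Suc k * gauss_binom x n (Suc k) * c (Suc k))"
  proof -
    have "(\<Sum>k\<le>n. x ^ k * gauss_binom x n k * c k) = (\<Sum>k\<le>Suc n. x ^ k * gauss_binom x n k * c k)"
      by (simp add: gauss_binom_eq_0)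
    then show ?thesis by (simp only: sum.atMost_Suc_shift) simp
  qed
  have "(\<Sum>k\<le>Suc n. gauss_binom x (Suc n) k * c k)
      = c 0 + (\<Sum>k\<le>n. gauss_binom x n k * c (Suc k))
          + (\<Sum>k\<le>n. x ^ Suc k * gauss_binom x n (Suc k) * c (Suc k))"
    by (simp only: sum.atMost_Suc_shift) (simp add: distrib_right sum.distrib)
  also have "\<dots> = (\<Sum>k\<le>n. gauss_binom x n k * c (Suc k)) + (\<Sum>k\<le>n. x ^ k * gauss_binom x n k * c k)"
    unfolding shifted by (simp only: add_ac)
  also have "\<dots> = (\<Sum>k\<le>n. gauss_binom x n k * (c (Suc k) + x ^ k * c k))"
    by (simp add: distrib_left sum.distrib mult_ac)
  finally show ?thesis .
qed

lemma gauss_binom_qpoch: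
  "k \<le> n \<Longrightarrow> gauss_binom x n k * qpoch x x k * qpoch x x (n - k) = qpoch x x n"
proof (induction n arbitrary: k)
  case 0
  then show ?case by simp
next
  case (Suc n)
  show ?case
  proof (cases k)
    case 0
    then show ?thesis by simp
  next
    case (Suc j)
    have low: "gauss_binom x n j * qpoch x x (Suc j) * qpoch x x (n - j) = qpoch x x n * (1 - x ^ Suc j)"
      using Suc.IH[of j] Suc.prems \<open>k = Suc j\<close> by (simp add: qpoch_Suc mult_ac)
    have high: "x ^ Suc j * gauss_binom x n (Suc j) * qpoch x x (Suc j) * qpoch x x (n - j)
        = x ^ Suc j * qpoch x x n * (1 - x ^ (n - j))"
    proof (cases "Suc j \<le> n")
      case True
      then have "n - j = Suc (n - Suc j)" by simp
      then show ?thesis using Suc.IH[OF True] by (simp add: qpoch_Suc mult_ac)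
    next
      case False
      then show ?thesis using Suc.prems \<open>k = Suc j\<close> by (simp add: gauss_binom_eq_0)
    qed
    have "gauss_binom x (Suc n) k * qpoch x x k * qpoch x x (Suc n - k)
        = gauss_binom x n j * qpoch x x (Suc j) * qpoch x x (n - j)
          + x ^ Suc j * gauss_binom x n (Suc j) * qpoch x x (Suc j) * qpoch x x (n - j)"
      by (simp add: \<open>k = Suc j\<close> algebra_simps)
    also have "\<dots> = qpoch x x n * (1 - x ^ Suc j * x ^ (n - j))"
      unfolding low high by (simp add: algebra_simps)
    also have "x ^ Suc j * x ^ (n - j) = x ^ Suc n"
      using Suc.prems \<open>k = Suc j\<close> by (simp flip: power_add)
    finally show ?thesis by (simp add: qpoch_Suc)
  qed
qed

lemma gauss_binom_eq_qpoch_inverse: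
  assumes "norm x < 1" "k \<le> n"
  shows "gauss_binom x n k = qpoch x x n * inverse (qpoch x x k) * inverse (qpoch x x (n - k))"
  using gauss_binom_qpoch[OF assms(2), of x] qpoch_nonzero[of x x] assms(1)
  by (simp add: field_simps)

(* Pascal's rule turns the sum for (m + 1, b) into the sum for (m, b + 1). *)
lemma sum_gauss_binom_qpoch:
  "(\<Sum>k\<le>m. x ^ (k * (k + b)) * gauss_binom x m k * qpoch (x ^ (k + b + 1)) x (m - k)) = 1"
proof (induction m arbitrary: b)
  case 0
  then show ?case by simp
next
  case (Suc m)
  define c where "c k = x ^ (k * (k + b)) * qpoch (x ^ (k + b + 1)) x (Suc m - k)" for k
  have step: "c (Suc k) + x ^ k * c k
      = x ^ (k * (k + (b + 1))) * qpoch (x ^ (k + (b + 1) + 1)) x (m - k)" if "k \<le> m" for k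
  proof -
    define e d P where "e = k * (k + b + 1)" and "d = k + b + 1"
      and "P = qpoch (x ^ (k + b + 2)) x (m - k)"
    have "Suc k * (Suc k + b) = e + d" "k + k * (k + b) = e"
      unfolding e_def d_def by (simp_all add: algebra_simps)
    then have pow: "x ^ (Suc k * (Suc k + b)) = x ^ e * x ^ d" "x ^ k * x ^ (k * (k + b)) = x ^ e"
      by (simp_all flip: power_add)
    have "c (Suc k) = x ^ e * x ^ d * P"
      unfolding c_def pow P_def d_def by (simp add: add_ac)
    moreover have "x ^ k * c k = x ^ e * (1 - x ^ d) * P"
    proof -
      have "qpoch (x ^ d) x (Suc m - k) = (1 - x ^ d) * P"
        using that unfolding P_def d_def by (simp add: Suc_diff_le qpoch_Suc_left mult_ac)
      then show ?thesis
        unfolding c_def mult.assoc[symmetric] pow(2) by (simp add: d_def mult.assoc)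
    qed
    moreover have "x ^ (k * (k + (b + 1))) * qpoch (x ^ (k + (b + 1) + 1)) x (m - k) = x ^ e * P"
      unfolding e_def P_def by (simp add: add_ac)
    ultimately show ?thesis by (simp add: algebra_simps)
  qed
  have "(\<Sum>k\<le>Suc m. x ^ (k * (k + b)) * gauss_binom x (Suc m) k * qpoch (x ^ (k + b + 1)) x (Suc m - k))
      = (\<Sum>k\<le>Suc m. gauss_binom x (Suc m) k * c k)"
    unfolding c_def by (simp add: mult_ac)
  also have "\<dots> = (\<Sum>k\<le>m. x ^ (k * (k + (b + 1))) * gauss_binom x m k * qpoch (x ^ (k + (b + 1) + 1)) x (m - k))"
    unfolding sum_gauss_binom_Suc
  proof (intro sum.cong refl)
    fix k assume "k \<in> {..m}"
    then have "k \<le> m" by simp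
    show "gauss_binom x m k * (c (Suc k) + x ^ k * c k)
        = x ^ (k * (k + (b + 1))) * gauss_binom x m k * qpoch (x ^ (k + (b + 1) + 1)) x (m - k)"
      unfolding step[OF \<open>k \<le> m\<close>] by (simp only: mult_ac)
  qed
  also have "\<dots> = 1"
    by (rule Suc.IH)
  finally show ?case .
qed

lemma q_chu_vandermonde:
  assumes "norm x < 1"
  shows "(\<Sum>k\<le>m. x ^ (k * (k + b)) * inverse (qpoch x x k * qpoch x x (m - k) * qpoch x x (k + b)))
       = inverse (qpoch x x m * qpoch x x (m + b))"
proof -
  have nz: "qpoch x x n \<noteq> 0" for n
    using assms by (simp add: qpoch_nonzero)
  have summand: "qpoch x x m * qpoch x x (m + b)
        * (x ^ (k * (k + b)) * inverse (qpoch x x k * qpoch x x (m - k) * qpoch x x (k + b)))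
      = x ^ (k * (k + b)) * gauss_binom x m k * qpoch (x ^ (k + b + 1)) x (m - k)" if "k \<le> m" for k
  proof -
    have "qpoch x x (m + b) = qpoch x x (k + b) * qpoch (x ^ (k + b + 1)) x (m - k)"
      using qpoch_add[of x x "k + b" "m - k"] that by (simp add: add.commute[of m b])
    then show ?thesis
      using gauss_binom_eq_qpoch_inverse[OF assms that] nz by (simp add: field_simps)
  qed
  have "qpoch x x m * qpoch x x (m + b)
      * (\<Sum>k\<le>m. x ^ (k * (k + b)) * inverse (qpoch x x k * qpoch x x (m - k) * qpoch x x (k + b)))
      = (\<Sum>k\<le>m. x ^ (k * (k + b)) * gauss_binom x m k * qpoch (x ^ (k + b + 1)) x (m - k))"
    unfolding sum_distrib_left by (intro sum.cong refl) (simp only: atMost_iff summand)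
  also have "\<dots> = 1"
    by (rule sum_gauss_binom_qpoch)
  finally have "qpoch x x m * qpoch x x (m + b)
      * (\<Sum>k\<le>m. x ^ (k * (k + b)) * inverse (qpoch x x k * qpoch x x (m - k) * qpoch x x (k + b)))
      = 1" .
  then show ?thesis
    using nz by (simp add: field_simps)
qed

section \<open>Bailey's lemma\<close>

lemma bailey_lemma_sum_nat:
  assumes "norm x < 1"
  shows "(\<Sum>m\<le>L. qinvfac x (int L - int m) * x ^ m\<^sup>2 * qinvfac x (int m - int r) * qinvfac x (int m + int r))
       = x ^ r\<^sup>2 * qinvfac x (int L - int r) * qinvfac x (int L + int r)"
proof (cases "r \<le> L")
  case False
  then show ?thesis by (simp add: qinvfac_neg)
next
  case True
  define f where "f m = qinvfac x (int L - int m) * x ^ m\<^sup>2 * qinvfac x (int m - int r) * qinvfac x (int m + int r)" for m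
  have "(\<Sum>m\<le>L. f m) = (\<Sum>m\<in>{r..L}. f m)"
    by (rule sum.mono_neutral_right) (auto simp: f_def qinvfac_neg)
  also have "\<dots> = (\<Sum>k\<le>L - r. f (k + r))"
    using sum.shift_bounds_cl_nat_ivl[of f 0 r "L - r"] True by (simp add: atLeast0AtMost)
  also have "\<dots> = x ^ r\<^sup>2 * (\<Sum>k\<le>L - r. x ^ (k * (k + 2 * r))
      * inverse (qpoch x x k * qpoch x x (L - r - k) * qpoch x x (k + 2 * r)))"
    unfolding sum_distrib_left
  proof (intro sum.cong refl)
    fix k assume "k \<in> {..L - r}"
    then have "k + r \<le> L" using True by simp
    then have "int L - int (k + r) = int (L - r - k)" "int (k + r) - int r = int k"
      "int (k + r) + int r = int (k + 2 * r)"
      by simp_all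
    moreover have "(k + r)\<^sup>2 = r\<^sup>2 + k * (k + 2 * r)"
      by (simp add: power2_eq_square algebra_simps)
    then have "x ^ (k + r)\<^sup>2 = x ^ r\<^sup>2 * x ^ (k * (k + 2 * r))"
      by (simp only: power_add)
    ultimately show "f (k + r) = x ^ r\<^sup>2 * (x ^ (k * (k + 2 * r))
        * inverse (qpoch x x k * qpoch x x (L - r - k) * qpoch x x (k + 2 * r)))"
      unfolding f_def by (simp only: qinvfac_of_nat inverse_mult_distrib mult_ac)
  qed
  also have "\<dots> = x ^ r\<^sup>2 * inverse (qpoch x x (L - r) * qpoch x x (L + r))"
    using q_chu_vandermonde[OF assms, where m = "L - r" and b = "2 * r"] True by (simp add: add.commute)
  also have "\<dots> = x ^ r\<^sup>2 * qinvfac x (int L - int r) * qinvfac x (int L + int r)"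
  proof -
    have "int L - int r = int (L - r)" "int L + int r = int (L + r)"
      using True by simp_all
    then show ?thesis by (simp only: qinvfac_of_nat inverse_mult_distrib mult_ac)
  qed
  finally show ?thesis
    unfolding f_def .
qed

lemma bailey_lemma_sum:
  assumes "norm x < 1"
  shows "(\<Sum>m\<le>L. qinvfac x (int L - int m) * x ^ m\<^sup>2 * qinvfac x (int m - j) * qinvfac x (int m + j))
       = x ^ nat (j\<^sup>2) * qinvfac x (int L - j) * qinvfac x (int L + j)"
proof -
  obtain r where "j = int r \<or> j = - int r"
    by (cases j rule: int_cases2) auto
  then show ?thesis
    using bailey_lemma_sum_nat[OF assms, of L r] by (auto simp: nat_power_eq mult_ac)
qed

(* Bailey pairs relative to a = 1. *)
definition bailey_pair :: "complex \<Rightarrow> (int \<Rightarrow> complex) \<Rightarrow> (nat \<Rightarrow> complex) \<Rightarrow> bool" where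
  "bailey_pair x \<alpha> \<beta> \<longleftrightarrow>
     (\<forall>L. \<beta> L = (\<Sum>j = -int L..int L. \<alpha> j * qinvfac x (int L - j) * qinvfac x (int L + j)))"

definition bailey_step :: "complex \<Rightarrow> (nat \<Rightarrow> complex) \<Rightarrow> nat \<Rightarrow> complex" where
  "bailey_step x \<beta> L = (\<Sum>m\<le>L. qinvfac x (int L - int m) * x ^ m\<^sup>2 * \<beta> m)"

lemma bailey_lemma:
  assumes "norm x < 1" "bailey_pair x \<alpha> \<beta>"
  shows "bailey_pair x (\<lambda>j. x ^ nat (j\<^sup>2) * \<alpha> j) (bailey_step x \<beta>)"
  unfolding bailey_pair_def
proof
  fix L
  define t where "t m j = qinvfac x (int L - int m) * x ^ m\<^sup>2 * (\<alpha> j * qinvfac x (int m - j) * qinvfac x (int m + j))" for m j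
  have "bailey_step x \<beta> L = (\<Sum>m\<le>L. \<Sum>j = -int m..int m. t m j)"
    using assms(2) unfolding bailey_step_def bailey_pair_def t_def by (simp add: sum_distrib_left)
  also have "\<dots> = (\<Sum>m\<le>L. \<Sum>j = -int L..int L. t m j)"
    by (intro sum.cong refl sum.mono_neutral_left) (auto simp: t_def qinvfac_neg)
  also have "\<dots> = (\<Sum>j = -int L..int L. \<Sum>m\<le>L. t m j)"
    by (rule sum.swap)
  also have "\<dots> = (\<Sum>j = -int L..int L. \<alpha> j * (\<Sum>m\<le>L.
      qinvfac x (int L - int m) * x ^ m\<^sup>2 * qinvfac x (int m - j) * qinvfac x (int m + j)))"
    by (simp add: t_def sum_distrib_left mult_ac)
  also have "\<dots> = (\<Sum>j = -int L..int L. x ^ nat (j\<^sup>2) * \<alpha> j * qinvfac x (int L - j) * qinvfac x (int L + j))"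
    unfolding bailey_lemma_sum[OF assms(1)] by (simp only: mult_ac)
  finally show "bailey_step x \<beta> L
      = (\<Sum>j = -int L..int L. x ^ nat (j\<^sup>2) * \<alpha> j * qinvfac x (int L - j) * qinvfac x (int L + j))" .
qed

lemma bailey_chain:
  assumes "norm x < 1" "bailey_pair x \<alpha> \<beta>"
  shows "bailey_pair x (\<lambda>j. x ^ (k * nat (j\<^sup>2)) * \<alpha> j) ((bailey_step x ^^ k) \<beta>)"
proof (induction k)
  case 0
  then show ?case using assms(2) by simp
next
  case (Suc k)
  have "(\<lambda>j. x ^ (Suc k * nat (j\<^sup>2)) * \<alpha> j) = (\<lambda>j. x ^ nat (j\<^sup>2) * (x ^ (k * nat (j\<^sup>2)) * \<alpha> j))"
    by (simp add: power_add mult_ac)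
  then show ?case using bailey_lemma[OF assms(1) Suc.IH] by simp
qed

section \<open>A finite Jacobi triple product\<close>

lemma gauss_binom_rothe:
  fixes x y z :: "'a::comm_ring_1"
  shows "(\<Prod>i<n. y - z * x ^ i)
       = (\<Sum>k\<le>n. gauss_binom x n k * (-1) ^ k * x ^ (k choose 2) * z ^ k * y ^ (n - k))"
proof (induction n arbitrary: z)
  case 0
  then show ?case by (simp add: binomial_eq_0)
next
  case (Suc n)
  define c where "c k = (-1) ^ k * x ^ (k choose 2) * z ^ k * y ^ (Suc n - k)" for k
  have step: "c (Suc k) + x ^ k * c k = (y - z) * ((-1) ^ k * x ^ (k choose 2) * (z * x) ^ k * y ^ (n - k))"
    if "k \<le> n" for k
  proof -
    have "Suc k choose 2 = (k choose 2) + k"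
      by (simp add: numeral_2_eq_2)
    moreover have "y ^ (Suc n - k) = y * y ^ (n - k)"
      using that by (simp add: Suc_diff_le)
    ultimately show ?thesis
      unfolding c_def by (simp add: power_add power_mult_distrib algebra_simps)
  qed
  have "(\<Prod>i<Suc n. y - z * x ^ i) = (y - z) * (\<Prod>i<n. y - (z * x) * x ^ i)"
    unfolding prod.lessThan_Suc_shift by (simp add: mult_ac)
  also have "\<dots> = (\<Sum>k\<le>n. gauss_binom x n k * (c (Suc k) + x ^ k * c k))"
    unfolding Suc.IH sum_distrib_left
  proof (intro sum.cong refl)
    fix k assume "k \<in> {..n}"
    then show "(y - z) * (gauss_binom x n k * (-1) ^ k * x ^ (k choose 2) * (z * x) ^ k * y ^ (n - k))
        = gauss_binom x n k * (c (Suc k) + x ^ k * c k)"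
      using step[of k] by (simp only: atMost_iff mult_ac)
  qed
  also have "\<dots> = (\<Sum>k\<le>Suc n. gauss_binom x (Suc n) k * c k)"
    by (rule sum_gauss_binom_Suc[symmetric])
  finally show ?case
    unfolding c_def by (simp only: mult.assoc)
qed

lemma prod_lessThan_add: "(\<Prod>i<m + n. f i) = (\<Prod>i<m. f i) * (\<Prod>i<n. f (m + i))" for m n :: nat
  by (induction n) (simp_all add: mult_ac)

lemma two_mult_choose_two: "2 * (n choose 2) = n * (n - 1)" for n :: nat
  by (induction n) (simp_all add: numeral_2_eq_2 algebra_simps)

lemma gauss_binom_zero_base: "k \<le> n \<Longrightarrow> gauss_binom 0 n k = 1"
  by (induction n arbitrary: k) (auto simp: gauss_binom_eq_0 power_0_left)

lemma triple_product_exponent: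
  assumes "k \<le> 2 * L" "L = Suc l"
  shows "2 * (k choose 2) + (2 * l + 1) * (2 * L - k) = nat ((int k - int L)\<^sup>2) + L * (3 * l + 1)"
proof -
  have "int (2 * L - k) = 2 * int L - int k"
    using assms(1) by simp
  then have "int ((2 * l + 1) * (2 * L - k)) = (2 * int l + 1) * (2 * int L - int k)"
    by (simp only: of_nat_mult) simp
  moreover have "int (k * (k - 1)) = int k * (int k - 1)"
    by (cases k) (simp_all add: algebra_simps)
  moreover have "int (nat ((int k - int L)\<^sup>2)) = (int k - int L)\<^sup>2"
    by simp
  ultimately have "int (2 * (k choose 2) + (2 * l + 1) * (2 * L - k)) = int (nat ((int k - int L)\<^sup>2) + L * (3 * l + 1))"
    unfolding two_mult_choose_two of_nat_add
    by (simp add: assms(2) power2_eq_square algebra_simps)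
  then show ?thesis
    by (simp only: of_nat_eq_iff)
qed

lemma triple_product_prefactor:
  fixes q w :: "'a::comm_ring_1"
  assumes "L = Suc l"
  shows "(\<Prod>i<2 * L. q ^ (2 * l + 1) - w * (q\<^sup>2) ^ i)
       = q ^ (L * (3 * l + 1)) * (\<Prod>i<L. (1 - w * q ^ (2 * i + 1)) * (q ^ (2 * i + 1) - w))"
proof -
  define y where "y = q ^ (2 * l + 1)"
  have upper: "y - w * (q\<^sup>2) ^ (L + i) = q ^ (2 * l + 1) * (1 - w * q ^ (2 * i + 1))" for i
  proof -
    have "2 * (L + i) = (2 * l + 1) + (2 * i + 1)" using assms by simp
    then have "(q\<^sup>2) ^ (L + i) = q ^ (2 * l + 1) * q ^ (2 * i + 1)"
      by (simp only: power_mult[symmetric] power_add[symmetric])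
    then show ?thesis unfolding y_def by (simp add: right_diff_distrib mult_ac)
  qed
  have lower: "y - w * (q\<^sup>2) ^ (L - Suc i) = q ^ (2 * (l - i)) * (q ^ (2 * i + 1) - w)"
    if "i < L" for i
  proof -
    have "2 * l + 1 = 2 * (l - i) + (2 * i + 1)" using that assms by simp
    then have "y = q ^ (2 * (l - i)) * q ^ (2 * i + 1)"
      unfolding y_def by (simp only: power_add[symmetric])
    moreover have "(q\<^sup>2) ^ (L - Suc i) = q ^ (2 * (l - i))"
      using assms by (simp add: power_mult)
    ultimately show ?thesis by (simp add: right_diff_distrib mult_ac)
  qed
  define E where "E = L * (3 * l + 1)"
  have "(\<Sum>i<L. 2 * (l - i)) + (2 * l + 1) * L = E"
  proof -
    have "(\<Sum>i<L. 2 * (l - i)) = 2 * (\<Sum>i = 0..l. i)"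
      using sum.nat_diff_reindex[of "\<lambda>i. 2 * i" L] assms
      by (simp add: sum_distrib_left atLeast0AtMost lessThan_Suc_atMost)
    also have "\<dots> = l * (l + 1)"
      using double_gauss_sum[of l, where 'a = nat] by simp
    finally show ?thesis unfolding assms E_def by (simp add: algebra_simps)
  qed
  moreover have "(\<Prod>i<L. q ^ (2 * (l - i))) * (\<Prod>i<L. q ^ (2 * l + 1))
      = q ^ (\<Sum>i<L. 2 * (l - i)) * q ^ ((2 * l + 1) * L)"
    by (simp only: power_sum prod_constant card_lessThan power_mult)
  ultimately have prefactor: "(\<Prod>i<L. q ^ (2 * (l - i))) * (\<Prod>i<L. q ^ (2 * l + 1)) = q ^ E"
    by (simp flip: power_add)
  have "(\<Prod>i<2 * L. y - w * (q\<^sup>2) ^ i)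
      = (\<Prod>i<L. y - w * (q\<^sup>2) ^ (L - Suc i)) * (\<Prod>i<L. y - w * (q\<^sup>2) ^ (L + i))"
    using prod_lessThan_add[of "\<lambda>i. y - w * (q\<^sup>2) ^ i" L L]
      prod.nat_diff_reindex[of "\<lambda>i. y - w * (q\<^sup>2) ^ i" L]
    by (simp add: mult_2)
  also have "\<dots> = (\<Prod>i<L. q ^ (2 * (l - i)) * (q ^ (2 * i + 1) - w))
      * (\<Prod>i<L. q ^ (2 * l + 1) * (1 - w * q ^ (2 * i + 1)))"
    by (simp add: upper lower)
  also have "\<dots> = q ^ E * (\<Prod>i<L. (1 - w * q ^ (2 * i + 1)) * (q ^ (2 * i + 1) - w))"
    unfolding prefactor[symmetric] prod.distrib by (simp add: mult_ac)
  finally show ?thesis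
    unfolding y_def E_def .
qed

lemma triple_product_rothe:
  fixes q w :: "'a::comm_ring_1"
  assumes "L = Suc l"
  shows "q ^ (L * (3 * l + 1))
       * (\<Sum>k\<le>2 * L. (-1) ^ k * q ^ nat ((int k - int L)\<^sup>2) * w ^ k * gauss_binom (q\<^sup>2) (2 * L) k)
       = (\<Prod>i<2 * L. q ^ (2 * l + 1) - w * (q\<^sup>2) ^ i)"
  unfolding gauss_binom_rothe sum_distrib_left
proof (intro sum.cong refl)
  fix k assume "k \<in> {..2 * L}"
  then have exponent: "2 * (k choose 2) + (2 * l + 1) * (2 * L - k) = nat ((int k - int L)\<^sup>2) + L * (3 * l + 1)"
    using triple_product_exponent assms by simp
  have "(q\<^sup>2) ^ (k choose 2) * (q ^ (2 * l + 1)) ^ (2 * L - k)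
      = q ^ (2 * (k choose 2) + (2 * l + 1) * (2 * L - k))"
    by (simp only: power_add power_mult)
  also have "\<dots> = q ^ (L * (3 * l + 1)) * q ^ nat ((int k - int L)\<^sup>2)"
    unfolding exponent by (simp only: power_add mult.commute)
  finally have prefactor_power: "(q\<^sup>2) ^ (k choose 2) * (q ^ (2 * l + 1)) ^ (2 * L - k)
      = q ^ (L * (3 * l + 1)) * q ^ nat ((int k - int L)\<^sup>2)" .
  have "q ^ (L * (3 * l + 1)) * ((-1) ^ k * q ^ nat ((int k - int L)\<^sup>2) * w ^ k * gauss_binom (q\<^sup>2) (2 * L) k)
      = gauss_binom (q\<^sup>2) (2 * L) k * (-1) ^ k * w ^ k * (q ^ (L * (3 * l + 1)) * q ^ nat ((int k - int L)\<^sup>2))"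
    by (simp only: mult_ac)
  also have "\<dots> = gauss_binom (q\<^sup>2) (2 * L) k * (-1) ^ k * w ^ k
      * ((q\<^sup>2) ^ (k choose 2) * (q ^ (2 * l + 1)) ^ (2 * L - k))"
    unfolding prefactor_power ..
  also have "\<dots> = gauss_binom (q\<^sup>2) (2 * L) k * (-1) ^ k * (q\<^sup>2) ^ (k choose 2) * w ^ k * (q ^ (2 * l + 1)) ^ (2 * L - k)"
    by (simp only: mult_ac)
  finally show "q ^ (L * (3 * l + 1)) * ((-1) ^ k * q ^ nat ((int k - int L)\<^sup>2) * w ^ k * gauss_binom (q\<^sup>2) (2 * L) k)
      = gauss_binom (q\<^sup>2) (2 * L) k * (-1) ^ k * (q\<^sup>2) ^ (k choose 2) * w ^ k * (q ^ (2 * l + 1)) ^ (2 * L - k)" .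
qed

lemma finite_jacobi_triple_product:
  fixes q w :: "'a::idom"
  shows "(\<Sum>k\<le>2 * L. (-1) ^ k * q ^ nat ((int k - int L)\<^sup>2) * w ^ k * gauss_binom (q\<^sup>2) (2 * L) k)
       = (\<Prod>i<L. (1 - w * q ^ (2 * i + 1)) * (q ^ (2 * i + 1) - w))"
proof (cases "q = 0")
  case True
  have "(\<Sum>k\<le>2 * L. (-1) ^ k * q ^ nat ((int k - int L)\<^sup>2) * w ^ k * gauss_binom (q\<^sup>2) (2 * L) k)
      = (\<Sum>k\<le>2 * L. if k = L then (-1) ^ L * w ^ L else 0)"
  proof (intro sum.cong refl)
    fix k
    have "gauss_binom (0::'a) (2 * L) L = 1"
      by (simp add: gauss_binom_zero_base)
    then show "(-1) ^ k * q ^ nat ((int k - int L)\<^sup>2) * w ^ k * gauss_binom (q\<^sup>2) (2 * L) k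
        = (if k = L then (-1) ^ L * w ^ L else 0)"
      using True by simp
  qed
  also have "\<dots> = (-w) ^ L"
    by (simp add: power_minus[of w])
  finally show ?thesis
    using True by simp
next
  case False
  show ?thesis
  proof (cases L)
    case 0
    then show ?thesis by simp
  next
    case (Suc l)
    have "q ^ (L * (3 * l + 1))
        * (\<Sum>k\<le>2 * L. (-1) ^ k * q ^ nat ((int k - int L)\<^sup>2) * w ^ k * gauss_binom (q\<^sup>2) (2 * L) k)
        = q ^ (L * (3 * l + 1)) * (\<Prod>i<L. (1 - w * q ^ (2 * i + 1)) * (q ^ (2 * i + 1) - w))"
      unfolding triple_product_rothe[OF Suc] by (rule triple_product_prefactor[OF Suc])
    then show ?thesis
      using False by simp
  qed
qed

section \<open>The base Bailey pair\<close>

definition omega :: complex where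
  "omega = Complex (-1/2) (sqrt 3 / 2)"

lemma omega_root: "omega\<^sup>2 + omega + 1 = 0"
  by (simp add: omega_def complex_eq_iff power2_eq_square)

lemma omega_cube: "omega ^ 3 = 1"
proof -
  have "omega ^ 3 - 1 = (omega - 1) * (omega\<^sup>2 + omega + 1)"
    by (simp add: algebra_simps power2_eq_square power3_eq_cube)
  then show ?thesis using omega_root by simp
qed

lemma omega_pow_4: "omega ^ 4 = omega"
proof -
  have "omega ^ 4 = omega ^ 3 * omega ^ 1"
    by (simp only: power_add[symmetric]) simp
  then show ?thesis
    using omega_cube by simp
qed

lemma omega_squared_cube: "(omega\<^sup>2) ^ 3 = 1"
proof -
  have "(omega\<^sup>2) ^ 3 = (omega ^ 3)\<^sup>2"
    by (simp only: power_mult[symmetric] mult.commute)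
  then show ?thesis
    using omega_cube by simp
qed

lemma omega_squared_root: "(omega\<^sup>2)\<^sup>2 + omega\<^sup>2 + 1 = 0"
  using omega_root by (simp add: omega_pow_4 add_ac flip: power_mult)

lemma omega_neq_omega_squared: "omega \<noteq> omega\<^sup>2"
  by (simp add: omega_def complex_eq_iff power2_eq_square)

lemma power_mod_3:
  fixes z :: "'a::monoid_mult"
  assumes "z ^ 3 = 1"
  shows "z ^ n = z ^ (n mod 3)"
proof -
  have "z ^ n = z ^ (3 * (n div 3) + n mod 3)"
    by simp
  also have "\<dots> = (z ^ 3) ^ (n div 3) * z ^ (n mod 3)"
    by (simp only: power_add power_mult)
  finally show ?thesis
    using assms by simp
qed

lemma root_of_unity_factor:
  fixes w a :: "'a::comm_ring_1"
  assumes "w\<^sup>2 + w + 1 = 0"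
  shows "(1 - w * a) * (a - w) = (- w) * (1 + a + a\<^sup>2)"
proof -
  have "(1 - w * a) * (a - w) + w * (1 + a + a\<^sup>2) = a * (w\<^sup>2 + w + 1)"
    by (simp add: algebra_simps power2_eq_square)
  then show ?thesis
    using assms by (simp add: eq_neg_iff_add_eq_0)
qed

lemma Legendre_3: "Legendre m 3 = (if m mod 3 = 0 then 0 else if m mod 3 = 1 then 1 else -1)"
proof -
  have "[Legendre m 3 = m] (mod 3)"
    using euler_criterion[of 3 m] by simp
  moreover have "Legendre m 3 \<in> {-1, 0, 1}"
    by (simp add: Legendre_def)
  ultimately show ?thesis
    unfolding cong_def by auto
qed

lemma Legendre_3_omega:
  assumes "[int n = m] (mod 3)"
  shows "of_int (Legendre m 3) * (omega - omega\<^sup>2) = omega ^ n - (omega\<^sup>2) ^ n"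
proof -
  have powers: "omega ^ n = omega ^ (n mod 3)" "(omega\<^sup>2) ^ n = (omega\<^sup>2) ^ (n mod 3)"
    using power_mod_3 omega_cube omega_squared_cube by blast+
  have m: "m mod 3 = int (n mod 3)"
    using assms unfolding cong_def by (simp add: zmod_int)
  consider "n mod 3 = 0" | "n mod 3 = 1" | "n mod 3 = 2"
    by linarith
  then show ?thesis
  proof cases
    case 1
    then show ?thesis unfolding powers Legendre_3 m by simp
  next
    case 2
    then show ?thesis unfolding powers Legendre_3 m by simp
  next
    case 3
    then show ?thesis unfolding powers Legendre_3 m by (simp add: omega_pow_4 flip: power_mult)
  qed
qed

lemma finite_jacobi_triple_product_cube_root:
  fixes q w :: "'a::idom"
  assumes "w\<^sup>2 + w + 1 = 0"
  shows "(\<Sum>k\<le>2 * L. (-1) ^ k * q ^ nat ((int k - int L)\<^sup>2) * w ^ k * gauss_binom (q\<^sup>2) (2 * L) k)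
       = (-w) ^ L * (\<Prod>i<L. 1 + q ^ (2 * i + 1) + (q ^ (2 * i + 1))\<^sup>2)"
  unfolding finite_jacobi_triple_product root_of_unity_factor[OF assms]
  by (simp only: prod.distrib prod_constant card_lessThan)

lemma cube_root_of_unity_power:
  fixes z :: "'a::comm_ring_1"
  assumes "z ^ 3 = 1"
  shows "(-1) ^ L * (z ^ (2 * L + 1) * (-z) ^ L) = z"
proof -
  have "(-1) ^ L * (z ^ (2 * L + 1) * (-z) ^ L) = z ^ (2 * L + 1) * ((-1) ^ L * (-z) ^ L)"
    by (simp only: mult.left_commute)
  also have "\<dots> = z ^ (2 * L + 1) * z ^ L"
    by (simp flip: power_mult_distrib)
  also have "\<dots> = z ^ (3 * L + 1)"
  proof -
    have "2 * L + 1 + L = 3 * L + 1"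
      by simp
    then show ?thesis
      by (simp only: power_add[symmetric])
  qed
  also have "\<dots> = (z ^ 3) ^ L * z"
    by (simp add: power_mult)
  finally show ?thesis
    using assms by simp
qed

lemma sum_Legendre_3_gauss_binom:
  fixes q :: complex
  shows "(\<Sum>k\<le>2 * L. (-1) ^ (k + L) * of_int (Legendre (int k - int L + 1) 3)
            * q ^ nat ((int k - int L)\<^sup>2) * gauss_binom (q\<^sup>2) (2 * L) k)
       = (\<Prod>i<L. 1 + q ^ (2 * i + 1) + (q ^ (2 * i + 1))\<^sup>2)"
    (is "?S = ?P")
proof -
  define T where "T w = (\<Sum>k\<le>2 * L. (-1) ^ k * q ^ nat ((int k - int L)\<^sup>2) * w ^ k * gauss_binom (q\<^sup>2) (2 * L) k)"
    for w
  have "(omega - omega\<^sup>2) * ?S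
      = (-1) ^ L * (omega ^ (2 * L + 1) * T omega - (omega\<^sup>2) ^ (2 * L + 1) * T (omega\<^sup>2))"
    unfolding T_def sum_distrib_left right_diff_distrib sum_subtractf[symmetric]
  proof (intro sum.cong refl)
    fix k
    define X where "X = q ^ nat ((int k - int L)\<^sup>2) * gauss_binom (q\<^sup>2) (2 * L) k"
    have "[int (k + 2 * L + 1) = int k - int L + 1] (mod 3)"
      unfolding cong_def by presburger
    from Legendre_3_omega[OF this]
    have chi: "of_int (Legendre (int k - int L + 1) 3) * (omega - omega\<^sup>2)
        = omega ^ (2 * L + 1) * omega ^ k - (omega\<^sup>2) ^ (2 * L + 1) * (omega\<^sup>2) ^ k"
      by (simp only: power_add[symmetric] add_ac)
    have "(omega - omega\<^sup>2) * ((-1) ^ (k + L) * of_int (Legendre (int k - int L + 1) 3)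
            * q ^ nat ((int k - int L)\<^sup>2) * gauss_binom (q\<^sup>2) (2 * L) k)
        = (-1) ^ L * (-1) ^ k * X * (of_int (Legendre (int k - int L + 1) 3) * (omega - omega\<^sup>2))"
      by (simp add: X_def power_add mult_ac)
    also have "\<dots> = (-1) ^ L * (omega ^ (2 * L + 1) * ((-1) ^ k * q ^ nat ((int k - int L)\<^sup>2) * omega ^ k * gauss_binom (q\<^sup>2) (2 * L) k))
          - (-1) ^ L * ((omega\<^sup>2) ^ (2 * L + 1) * ((-1) ^ k * q ^ nat ((int k - int L)\<^sup>2) * (omega\<^sup>2) ^ k * gauss_binom (q\<^sup>2) (2 * L) k))"
      unfolding chi X_def by (simp add: algebra_simps)
    finally show "(omega - omega\<^sup>2) * ((-1) ^ (k + L) * of_int (Legendre (int k - int L + 1) 3)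
            * q ^ nat ((int k - int L)\<^sup>2) * gauss_binom (q\<^sup>2) (2 * L) k)
        = (-1) ^ L * (omega ^ (2 * L + 1) * ((-1) ^ k * q ^ nat ((int k - int L)\<^sup>2) * omega ^ k * gauss_binom (q\<^sup>2) (2 * L) k))
          - (-1) ^ L * ((omega\<^sup>2) ^ (2 * L + 1) * ((-1) ^ k * q ^ nat ((int k - int L)\<^sup>2) * (omega\<^sup>2) ^ k * gauss_binom (q\<^sup>2) (2 * L) k))" .
  qed
  also have "\<dots> = ((-1) ^ L * (omega ^ (2 * L + 1) * (-omega) ^ L)
      - (-1) ^ L * ((omega\<^sup>2) ^ (2 * L + 1) * (-(omega\<^sup>2)) ^ L)) * ?P"
    unfolding T_def finite_jacobi_triple_product_cube_root[OF omega_root]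
      finite_jacobi_triple_product_cube_root[OF omega_squared_root]
    by (simp add: algebra_simps)
  also have "\<dots> = (omega - omega\<^sup>2) * ?P"
    unfolding cube_root_of_unity_power[OF omega_cube] cube_root_of_unity_power[OF omega_squared_cube] ..
  finally show ?thesis
    using omega_neq_omega_squared by simp
qed

lemma qpoch_cube_ratio:
  fixes q :: complex
  assumes "norm q < 1"
  shows "qpoch (q ^ 3) (q ^ 6) n / qpoch q (q\<^sup>2) n = (\<Prod>i<n. 1 + q ^ (2 * i + 1) + (q ^ (2 * i + 1))\<^sup>2)"
  unfolding qpoch_def prod_dividef[symmetric]
proof (intro prod.cong refl)
  fix i
  define a where "a = q ^ (2 * i + 1)"
  have "q * (q\<^sup>2) ^ i = a" "q ^ 3 * (q ^ 6) ^ i = a ^ 3"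
    unfolding a_def by (simp_all add: algebra_simps flip: power_mult power_Suc power_add)
  moreover have "a \<noteq> 1"
  proof
    assume "a = 1"
    then have "norm q ^ (2 * i + 1) = 1"
      unfolding a_def by (metis norm_one norm_power)
    moreover have "norm q ^ (2 * i + 1) < 1"
      by (subst power_less_one_iff) (use assms in auto)
    ultimately show False by simp
  qed
  moreover have "1 - a ^ 3 = (1 - a) * (1 + a + a\<^sup>2)"
    by (simp add: algebra_simps power2_eq_square power3_eq_cube)
  ultimately show "(1 - q ^ 3 * (q ^ 6) ^ i) / (1 - q * (q\<^sup>2) ^ i) = 1 + q ^ (2 * i + 1) + (q ^ (2 * i + 1))\<^sup>2"
    unfolding a_def[symmetric] by simp
qed

lemma minus_one_power_nat_abs_diff: "(-1) ^ nat \<bar>int k - int L\<bar> = ((-1) ^ (k + L) :: 'a::ring_1)"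
proof (cases "L \<le> k")
  case True
  then have "nat \<bar>int k - int L\<bar> = k - L" "k + L = (k - L) + 2 * L" by auto
  then show ?thesis by (simp only: power_add power_mult) simp
next
  case False
  then have "nat \<bar>int k - int L\<bar> = L - k" "k + L = (L - k) + 2 * k" by auto
  then show ?thesis by (simp only: power_add power_mult) simp
qed

lemma bailey_pair_base:
  fixes q :: complex
  assumes "norm q < 1"
  shows "bailey_pair (q\<^sup>2) (\<lambda>j. (-1) ^ nat \<bar>j\<bar> * of_int (Legendre (j + 1) 3) * q ^ nat (j\<^sup>2))
           (\<lambda>L. qinvfac (q\<^sup>2) (int (2 * L)) * (qpoch (q ^ 3) (q ^ 6) L / qpoch q (q\<^sup>2) L))"
  unfolding bailey_pair_def
proof
  fix L
  define x where "x = q\<^sup>2"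
  have x: "norm x < 1"
    using assms unfolding x_def by (simp add: norm_power power_less_one_iff)
  define c where "c k = (-1) ^ (k + L) * of_int (Legendre (int k - int L + 1) 3) * q ^ nat ((int k - int L)\<^sup>2)"
    for k
  have "qinvfac x (int (2 * L)) * (qpoch (q ^ 3) (q ^ 6) L / qpoch q (q\<^sup>2) L)
      = inverse (qpoch x x (2 * L)) * (\<Sum>k\<le>2 * L. c k * gauss_binom x (2 * L) k)"
    unfolding qinvfac_of_nat qpoch_cube_ratio[OF assms] sum_Legendre_3_gauss_binom[symmetric] c_def x_def
    by (simp add: mult_ac)
  also have "\<dots> = (\<Sum>k\<le>2 * L. c k * inverse (qpoch x x k) * inverse (qpoch x x (2 * L - k)))"
    unfolding sum_distrib_left
    by (intro sum.cong refl) (use qpoch_nonzero[of x x] x in \<open>simp add: gauss_binom_eq_qpoch_inverse\<close>)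
  also have "\<dots> = (\<Sum>j = -int L..int L. (-1) ^ nat \<bar>j\<bar> * of_int (Legendre (j + 1) 3) * q ^ nat (j\<^sup>2)
      * qinvfac x (int L - j) * qinvfac x (int L + j))"
  proof (rule sum.reindex_bij_witness[where i = "\<lambda>j. nat (j + int L)" and j = "\<lambda>k. int k - int L"])
    fix k assume "k \<in> {..2 * L}"
    then have "int L - (int k - int L) = int (2 * L - k)" "int L + (int k - int L) = int k"
      by auto
    then show "(-1) ^ nat \<bar>int k - int L\<bar> * of_int (Legendre (int k - int L + 1) 3) * q ^ nat ((int k - int L)\<^sup>2)
        * qinvfac x (int L - (int k - int L)) * qinvfac x (int L + (int k - int L))
        = c k * inverse (qpoch x x k) * inverse (qpoch x x (2 * L - k))"
      unfolding c_def minus_one_power_nat_abs_diff by (simp only: qinvfac_of_nat mult_ac)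
  qed auto
  finally show "qinvfac (q\<^sup>2) (int (2 * L)) * (qpoch (q ^ 3) (q ^ 6) L / qpoch q (q\<^sup>2) L)
      = (\<Sum>j = -int L..int L. (-1) ^ nat \<bar>j\<bar> * of_int (Legendre (j + 1) 3) * q ^ nat (j\<^sup>2)
          * qinvfac (q\<^sup>2) (int L - j) * qinvfac (q\<^sup>2) (int L + j))"
    unfolding x_def .
qed

section \<open>The multisum as a Bailey chain\<close>

definition tuples :: "nat \<Rightarrow> (nat \<Rightarrow> nat) set" where
  "tuples v = {n. \<forall>i. (i < 1 \<or> i > v) \<longrightarrow> n i = 0}"

definition tail_sum :: "nat \<Rightarrow> (nat \<Rightarrow> nat) \<Rightarrow> nat \<Rightarrow> nat" where
  "tail_sum v n i = (\<Sum>k = i..v. n k)"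

definition bounded_tuples :: "nat \<Rightarrow> nat \<Rightarrow> (nat \<Rightarrow> nat) set" where
  "bounded_tuples v K = {n \<in> tuples v. tail_sum v n 1 \<le> K}"

definition multisum_term :: "complex \<Rightarrow> (nat \<Rightarrow> complex) \<Rightarrow> nat \<Rightarrow> (nat \<Rightarrow> nat) \<Rightarrow> complex" where
  "multisum_term x \<beta> v n =
     x ^ (\<Sum>i = 1..v. (tail_sum v n i)\<^sup>2) * (\<Prod>i = 1..<v. qinvfac x (int (n i))) * \<beta> (n v)"

definition tuple_cons :: "nat \<Rightarrow> (nat \<Rightarrow> nat) \<Rightarrow> nat \<Rightarrow> nat" where
  "tuple_cons a n = (\<lambda>i. if i = 0 then 0 else if i = 1 then a else n (i - 1))"

definition tuple_tl :: "(nat \<Rightarrow> nat) \<Rightarrow> nat \<Rightarrow> nat" where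
  "tuple_tl n = (\<lambda>i. if i = 0 then 0 else n (Suc i))"

lemma tuple_cons_in_tuples: "n \<in> tuples v \<Longrightarrow> tuple_cons a n \<in> tuples (Suc v)"
  by (auto simp: tuples_def tuple_cons_def)

lemma tuple_tl_in_tuples: "n \<in> tuples (Suc v) \<Longrightarrow> tuple_tl n \<in> tuples v"
  by (auto simp: tuples_def tuple_tl_def)

lemma tuple_cons_tl: "n \<in> tuples (Suc v) \<Longrightarrow> tuple_cons (n 1) (tuple_tl n) = n"
  by (auto simp: tuples_def tuple_cons_def tuple_tl_def)

lemma tuple_tl_cons: "n \<in> tuples v \<Longrightarrow> tuple_tl (tuple_cons a n) = n"
  by (auto simp: tuples_def tuple_cons_def tuple_tl_def)

lemma tuple_cons_1 [simp]: "tuple_cons a n 1 = a"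
  by (simp add: tuple_cons_def)

lemma tail_sum_cons_Suc: "1 \<le> i \<Longrightarrow> tail_sum (Suc v) (tuple_cons a n) (Suc i) = tail_sum v n i"
  unfolding tail_sum_def sum.shift_bounds_cl_Suc_ivl
  by (intro sum.cong refl) (auto simp: tuple_cons_def)

lemma tail_sum_cons_1: "tail_sum (Suc v) (tuple_cons a n) 1 = a + tail_sum v n 1"
proof -
  have "tail_sum (Suc v) (tuple_cons a n) 1 = a + tail_sum (Suc v) (tuple_cons a n) (Suc 1)"
    unfolding tail_sum_def by (simp add: sum.atLeast_Suc_atMost tuple_cons_def)
  also have "tail_sum (Suc v) (tuple_cons a n) (Suc 1) = tail_sum v n 1"
    by (rule tail_sum_cons_Suc) simp
  finally show ?thesis .
qed

lemma multisum_term_cons: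
  assumes "1 \<le> v"
  shows "multisum_term x \<beta> (Suc v) (tuple_cons a n)
       = x ^ (a + tail_sum v n 1)\<^sup>2 * qinvfac x (int a) * multisum_term x \<beta> v n"
proof -
  have "(\<Sum>i = 1..Suc v. (tail_sum (Suc v) (tuple_cons a n) i)\<^sup>2)
      = (tail_sum (Suc v) (tuple_cons a n) 1)\<^sup>2 + (\<Sum>i = 1..v. (tail_sum (Suc v) (tuple_cons a n) (Suc i))\<^sup>2)"
    by (simp add: sum.atLeast_Suc_atMost sum.shift_bounds_cl_Suc_ivl del: sum.cl_ivl_Suc)
  also have "\<dots> = (a + tail_sum v n 1)\<^sup>2 + (\<Sum>i = 1..v. (tail_sum v n i)\<^sup>2)"
    unfolding tail_sum_cons_1 by (simp add: tail_sum_cons_Suc)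
  finally have "(\<Sum>i = 1..Suc v. (tail_sum (Suc v) (tuple_cons a n) i)\<^sup>2)
      = (a + tail_sum v n 1)\<^sup>2 + (\<Sum>i = 1..v. (tail_sum v n i)\<^sup>2)" .
  moreover have "(\<Prod>i = 1..<Suc v. qinvfac x (int (tuple_cons a n i)))
      = qinvfac x (int a) * (\<Prod>i = 1..<v. qinvfac x (int (n i)))"
    using assms
    by (simp add: prod.atLeast_Suc_lessThan prod.shift_bounds_Suc_ivl tuple_cons_def del: prod.op_ivl_Suc)
  moreover have "tuple_cons a n (Suc v) = n v"
    using assms by (simp add: tuple_cons_def)
  ultimately show ?thesis
    unfolding multisum_term_def by (simp add: power_add mult_ac)
qed

lemma finite_bounded_tuples: "finite (bounded_tuples v K)"
proof (rule finite_subset)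
  have "n i \<le> K" if "n \<in> bounded_tuples v K" for n i
  proof (cases "1 \<le> i \<and> i \<le> v")
    case True
    then have "n i \<le> tail_sum v n 1"
      unfolding tail_sum_def by (intro member_le_sum) auto
    then show ?thesis using that by (simp add: bounded_tuples_def)
  next
    case False
    then have "i < 1 \<or> i > v"
      by auto
    then show ?thesis
      using that by (auto simp: bounded_tuples_def tuples_def)
  qed
  then show "bounded_tuples v K \<subseteq> {n. \<forall>i. (i \<in> {..v} \<longrightarrow> n i \<in> {..K}) \<and> (i \<notin> {..v} \<longrightarrow> n i = 0)}"
    by (auto simp: bounded_tuples_def tuples_def)
  show "finite {n. \<forall>i. (i \<in> {..v} \<longrightarrow> n i \<in> {..K}) \<and> (i \<notin> {..v} \<longrightarrow> n i = (0::nat))}"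
    by (rule finite_set_of_finite_funs) auto
qed

lemma sum_bounded_tuples_Suc:
  "(\<Sum>n\<in>bounded_tuples (Suc v) K. f n) = (\<Sum>a\<le>K. \<Sum>n\<in>bounded_tuples v (K - a). f (tuple_cons a n))"
proof -
  have "(\<Sum>n\<in>bounded_tuples (Suc v) K. f n)
      = (\<Sum>(a, n)\<in>Sigma {..K} (\<lambda>a. bounded_tuples v (K - a)). f (tuple_cons a n))"
  proof (rule sum.reindex_bij_witness[where i = "\<lambda>(a, n). tuple_cons a n" and j = "\<lambda>n. (n 1, tuple_tl n)"])
    fix n assume "n \<in> bounded_tuples (Suc v) K"
    then have n: "n \<in> tuples (Suc v)" "tail_sum (Suc v) n 1 \<le> K"
      by (simp_all add: bounded_tuples_def)
    have "tail_sum (Suc v) n 1 = n 1 + tail_sum v (tuple_tl n) 1"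
      using tail_sum_cons_1[of v "n 1" "tuple_tl n"] unfolding tuple_cons_tl[OF n(1)] .
    with n show "(n 1, tuple_tl n) \<in> Sigma {..K} (\<lambda>a. bounded_tuples v (K - a))"
      by (simp add: bounded_tuples_def tuple_tl_in_tuples)
    show "(case (n 1, tuple_tl n) of (a, n) \<Rightarrow> tuple_cons a n) = n"
      "(case (n 1, tuple_tl n) of (a, n) \<Rightarrow> f (tuple_cons a n)) = f n"
      unfolding case_prod_conv tuple_cons_tl[OF n(1)] by (rule refl)+
  next
    fix b assume "b \<in> Sigma {..K} (\<lambda>a. bounded_tuples v (K - a))"
    then obtain a n where b: "b = (a, n)" and a: "a \<le> K" and n: "n \<in> tuples v" "tail_sum v n 1 \<le> K - a"
      unfolding bounded_tuples_def by blast
    show "((case b of (a, n) \<Rightarrow> tuple_cons a n) 1, tuple_tl (case b of (a, n) \<Rightarrow> tuple_cons a n)) = b"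
      unfolding b case_prod_conv tuple_cons_1 tuple_tl_cons[OF n(1)] ..
    show "(case b of (a, n) \<Rightarrow> tuple_cons a n) \<in> bounded_tuples (Suc v) K"
      unfolding b case_prod_conv bounded_tuples_def mem_Collect_eq tail_sum_cons_1
      using a n tuple_cons_in_tuples[OF n(1)] by simp
  qed
  also have "\<dots> = (\<Sum>a\<le>K. \<Sum>n\<in>bounded_tuples v (K - a). f (tuple_cons a n))"
    by (rule sum.Sigma[symmetric]) (auto simp: finite_bounded_tuples)
  finally show ?thesis .
qed

lemma sum_atMost_diff_swap:
  "(\<Sum>a\<le>K. \<Sum>s\<le>K - a. h a s) = (\<Sum>m\<le>K. \<Sum>s\<le>m. h (m - s) s)" for K :: nat
proof -
  have "(\<Sum>a\<le>K. \<Sum>s\<le>K - a. h a s) = (\<Sum>(a, s)\<in>Sigma {..K} (\<lambda>a. {..K - a}). h a s)"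
    by (rule sum.Sigma) auto
  also have "\<dots> = (\<Sum>(m, s)\<in>Sigma {..K} (\<lambda>m. {..m}). h (m - s) s)"
    by (rule sum.reindex_bij_witness[where i = "\<lambda>(m, s). (m - s, s)" and j = "\<lambda>(a, s). (a + s, s)"])
      auto
  also have "\<dots> = (\<Sum>m\<le>K. \<Sum>s\<le>m. h (m - s) s)"
    by (rule sum.Sigma[symmetric]) auto
  finally show ?thesis .
qed

lemma tuples_1_eq: "n \<in> tuples 1 \<Longrightarrow> n = (\<lambda>i. if i = 1 then n 1 else 0)"
proof (rule ext)
  fix i
  assume n: "n \<in> tuples 1"
  show "n i = (if i = 1 then n 1 else 0)"
  proof (cases "i = 1")
    case False
    have "n i = 0"
    proof (rule n[unfolded tuples_def mem_Collect_eq, rule_format])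
      show "i < 1 \<or> i > 1"
        using False by linarith
    qed
    with False show ?thesis
      by simp
  qed simp
qed

lemma multisum_single:
  "(\<Sum>n\<in>bounded_tuples 1 K. multisum_term x \<beta> 1 n * g (tail_sum 1 n 1)) = (\<Sum>m\<le>K. x ^ m\<^sup>2 * \<beta> m * g m)"
proof (rule sum.reindex_bij_witness[where j = "\<lambda>n. n 1" and i = "\<lambda>m i. if i = 1 then m else 0"])
  have tail: "tail_sum 1 n 1 = n 1" for n
    by (simp add: tail_sum_def)
  fix n assume "n \<in> bounded_tuples 1 K"
  then have n: "n \<in> tuples 1" "n 1 \<le> K"
    unfolding bounded_tuples_def mem_Collect_eq tail by blast+
  show "(\<lambda>i. if i = 1 then n 1 else 0) = n"
    by (rule tuples_1_eq[OF n(1), symmetric])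
  show "n 1 \<in> {..K}"
    using n(2) by simp
  show "x ^ (n 1)\<^sup>2 * \<beta> (n 1) * g (n 1) = multisum_term x \<beta> 1 n * g (tail_sum 1 n 1)"
    by (simp add: tail multisum_term_def tail_sum_def)
next
  fix m assume "m \<in> {..K}"
  then show "(if 1 = 1 then m else 0) = m" "(\<lambda>i. if i = 1 then m else 0) \<in> bounded_tuples 1 K"
    by (simp_all add: bounded_tuples_def tuples_def tail_sum_def)
qed

lemma multisum_eq_bailey_chain:
  assumes "1 \<le> v"
  shows "(\<Sum>n\<in>bounded_tuples v K. multisum_term x \<beta> v n * g (tail_sum v n 1))
       = (\<Sum>m\<le>K. x ^ m\<^sup>2 * (bailey_step x ^^ (v - 1)) \<beta> m * g m)"
  using assms
proof (induction v arbitrary: K g rule: nat_induct_at_least)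
  case base
  then show ?case
    using multisum_single by simp
next
  case (Suc v)
  define B where "B = (bailey_step x ^^ (v - 1)) \<beta>"
  have chain: "(bailey_step x ^^ (Suc v - 1)) \<beta> = bailey_step x B"
    using Suc.hyps by (cases v) (simp_all add: B_def)
  have "(\<Sum>n\<in>bounded_tuples (Suc v) K. multisum_term x \<beta> (Suc v) n * g (tail_sum (Suc v) n 1))
      = (\<Sum>a\<le>K. \<Sum>n\<in>bounded_tuples v (K - a).
          multisum_term x \<beta> v n * (x ^ (a + tail_sum v n 1)\<^sup>2 * qinvfac x (int a) * g (a + tail_sum v n 1)))"
    unfolding sum_bounded_tuples_Suc multisum_term_cons[OF Suc.hyps] tail_sum_cons_1
    by (simp only: mult_ac)
  also have "\<dots> = (\<Sum>a\<le>K. \<Sum>s\<le>K - a. x ^ s\<^sup>2 * B s * (x ^ (a + s)\<^sup>2 * qinvfac x (int a) * g (a + s)))"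
  proof (intro sum.cong refl)
    fix a
    show "(\<Sum>n\<in>bounded_tuples v (K - a). multisum_term x \<beta> v n
          * (x ^ (a + tail_sum v n 1)\<^sup>2 * qinvfac x (int a) * g (a + tail_sum v n 1)))
        = (\<Sum>s\<le>K - a. x ^ s\<^sup>2 * B s * (x ^ (a + s)\<^sup>2 * qinvfac x (int a) * g (a + s)))"
      using Suc.IH[where K = "K - a" and g = "\<lambda>s. x ^ (a + s)\<^sup>2 * qinvfac x (int a) * g (a + s)"]
      by (simp only: B_def)
  qed
  also have "\<dots> = (\<Sum>m\<le>K. \<Sum>s\<le>m. x ^ s\<^sup>2 * B s * (x ^ (m - s + s)\<^sup>2 * qinvfac x (int (m - s)) * g (m - s + s)))"
    by (rule sum_atMost_diff_swap[where h = "\<lambda>a s. x ^ s\<^sup>2 * B s * (x ^ (a + s)\<^sup>2 * qinvfac x (int a) * g (a + s))"])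
  also have "\<dots> = (\<Sum>m\<le>K. x ^ m\<^sup>2 * bailey_step x B m * g m)"
    unfolding bailey_step_def sum_distrib_left sum_distrib_right
    by (intro sum.cong refl) (simp add: of_nat_diff mult_ac)
  finally show ?case
    unfolding chain .
qed

lemma qbinom_eq_qinvfac:
  "0 \<le> n \<Longrightarrow> qbinom x n k = qpoch x x (nat n) * qinvfac x k * qinvfac x (n - k)"
  by (auto simp: qbinom_def qinvfac_def)

lemma infsum_qbinom_central:
  "infsum (\<lambda>j. c j * qbinom x (2 * int L) (int L + j)) UNIV
     = qpoch x x (2 * L) * (\<Sum>j = -int L..int L. c j * qinvfac x (int L - j) * qinvfac x (int L + j))"
proof -
  have "infsum (\<lambda>j. c j * qbinom x (2 * int L) (int L + j)) UNIV
      = infsum (\<lambda>j. c j * qbinom x (2 * int L) (int L + j)) {-int L..int L}"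
    by (rule infsum_cong_neutral) (auto simp: qbinom_def)
  also have "\<dots> = (\<Sum>j = -int L..int L. c j * qbinom x (2 * int L) (int L + j))"
    by simp
  finally show ?thesis
    by (simp add: qbinom_eq_qinvfac sum_distrib_left nat_mult_distrib mult_ac)
qed

lemma infsum_tuples_qinvfac:
  "infsum (\<lambda>n. F n * qinvfac x (int L - int (tail_sum v n 1))) (tuples v)
     = (\<Sum>n\<in>bounded_tuples v L. F n * qinvfac x (int L - int (tail_sum v n 1)))"
proof -
  have "infsum (\<lambda>n. F n * qinvfac x (int L - int (tail_sum v n 1))) (tuples v)
      = infsum (\<lambda>n. F n * qinvfac x (int L - int (tail_sum v n 1))) (bounded_tuples v L)"
    by (rule infsum_cong_neutral) (auto simp: bounded_tuples_def qinvfac_neg)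
  then show ?thesis
    using finite_bounded_tuples by simp
qed

theorem mainTheorem13:
  fixes q :: complex and v L :: nat
  assumes "norm q < 1" and "v \<ge> 1"
  defines "qt \<equiv> q ^ 2"
  shows "infsum (\<lambda>n :: nat \<Rightarrow> nat.
            let N = (\<lambda>i. \<Sum>k = i..v. n k) in
            qt ^ (\<Sum>i = 1..v. (N i)^2)
            * (\<Prod>i = 1..<v. qinvfac qt (int (n i)))
            * qinvfac qt (int (2 * n v))
            * (qpoch (q^3) (q^6) (n v) / qpoch q (q^2) (n v))
            * qpoch qt qt (2 * L) * qinvfac qt (int L - int (N 1)))
          {n. \<forall>i. (i < 1 \<or> i > v) \<longrightarrow> n i = 0}
       = infsum (\<lambda>j :: int. (-1) ^ nat \<bar>j\<bar> * of_int (Legendre (j + 1) 3)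
            * q ^ ((2 * v + 1) * nat (j^2)) * qbinom qt (2 * int L) (int L + j)) UNIV"
proof -
  have qt: "norm qt < 1"
    using assms(1) unfolding qt_def by (simp add: norm_power power_less_one_iff)
  define \<beta> where "\<beta> m = qinvfac qt (int (2 * m)) * (qpoch (q ^ 3) (q ^ 6) m / qpoch q (q\<^sup>2) m)" for m
  define \<alpha> where "\<alpha> j = (-1) ^ nat \<bar>j\<bar> * of_int (Legendre (j + 1) 3) * q ^ ((2 * v + 1) * nat (j\<^sup>2))"
    for j
  have "bailey_pair qt (\<lambda>j. qt ^ (v * nat (j\<^sup>2)) * ((-1) ^ nat \<bar>j\<bar> * of_int (Legendre (j + 1) 3) * q ^ nat (j\<^sup>2)))
      ((bailey_step qt ^^ v) \<beta>)"
    using bailey_chain[OF qt] bailey_pair_base[OF assms(1)] unfolding qt_def \<beta>_def by blast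
  moreover have "qt ^ (v * nat (j\<^sup>2)) * ((-1) ^ nat \<bar>j\<bar> * of_int (Legendre (j + 1) 3) * q ^ nat (j\<^sup>2)) = \<alpha> j" for j
    unfolding qt_def \<alpha>_def by (simp add: power_add algebra_simps flip: power_mult)
  ultimately have pair: "bailey_pair qt \<alpha> ((bailey_step qt ^^ v) \<beta>)"
    by simp
  have "infsum (\<lambda>n. multisum_term qt \<beta> v n * qpoch qt qt (2 * L) * qinvfac qt (int L - int (tail_sum v n 1))) (tuples v)
      = (\<Sum>n\<in>bounded_tuples v L. multisum_term qt \<beta> v n * (qpoch qt qt (2 * L) * qinvfac qt (int L - int (tail_sum v n 1))))"
    unfolding infsum_tuples_qinvfac by (simp only: mult.assoc)
  also have "\<dots> = (\<Sum>m\<le>L. qt ^ m\<^sup>2 * (bailey_step qt ^^ (v - 1)) \<beta> m * (qpoch qt qt (2 * L) * qinvfac qt (int L - int m)))"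
    by (rule multisum_eq_bailey_chain[OF assms(2)])
  also have "\<dots> = qpoch qt qt (2 * L) * (bailey_step qt ^^ v) \<beta> L"
    using assms(2) by (cases v) (simp_all add: bailey_step_def sum_distrib_left mult_ac)
  also have "\<dots> = infsum (\<lambda>j. \<alpha> j * qbinom qt (2 * int L) (int L + j)) UNIV"
    using pair unfolding infsum_qbinom_central bailey_pair_def by simp
  finally show ?thesis
    unfolding tuples_def multisum_term_def tail_sum_def \<alpha>_def \<beta>_def Let_def by (simp add: mult_ac)
qed

end
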